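(* Let $f:\mathbb{R}^2_+\to\mathbb{R}$ be continuous, with $f(0,0)>0$, and assume there exists $R>0$ such that $f(x,y)<0$ whenever $x^2+y^2>R^2$. Then the zero set $Z=\{\mathbf z\in\mathbb{R}^2_+ : f(\mathbf z)=0\}$ has a compact connected subset $S$ which intersects both sets $\{(0,y) : r\le y\le R\}$ and $\{(x,0) : r\le x\le R\}$ for some $r\in(0,R)$.
   Context: $\mathbb{R}^2_+$ denotes the closed positive quadrant $\{(x,y):x\ge0,\,y\ge0\}$. *)

theory Defs
  imports "HOL-Analysis.Analysis"
begin

end

theory Submission
  imports Defs
begin

(* Extend f evenly to the whole plane by g(x,y) = f(|x|,|y|); g is continuous,
   positive at the origin and negative outside the closed disc of radius R.
   The general lemma separating_zero_continuum (any Euclidean space) produces a connected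
   closed set K of zeros of g meeting every connected set that joins the origin to the circle
   of radius R + 1: K is the frontier of the component C, containing the circle, of the
   complement of the component U of {g > 0} containing the origin; it is connected because
   U is, and lies in the frontier of U, hence in the zero set.
   In plane_zero_continuum, K is bounded (zeros lie in the disc of radius R), hence compact,
   and separating_set_meets_ray shows that the two positive half-axes meet K at points (0,t)
   and (s,0) with 0 < s, t <= R.  Folding K back into the quadrant by (x,y) |-> (|x|,|y|)
   gives the required continuum S for lemma2p2, with r = min s t / 2. *)

definition fold_quadrant :: "real \<times> real \<Rightarrow> real \<times> real" where
  "fold_quadrant z = (\<bar>fst z\<bar>, \<bar>snd z\<bar>)"

lemma continuous_fold_quadrant: "continuous_on A fold_quadrant"
  unfolding fold_quadrant_def by (intro continuous_intros)

lemma norm_plane_squared: "(norm z)\<^sup>2 = (fst z)\<^sup>2 + (snd z)\<^sup>2" for z :: "real \<times> real"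
  by (cases z) (simp add: norm_Pair)

lemma continuous_even_extension:
  assumes "continuous_on {z. fst z \<ge> 0 \<and> snd z \<ge> 0} f"
  shows "continuous_on UNIV (f \<circ> fold_quadrant)"
  by (rule continuous_on_compose[OF continuous_fold_quadrant continuous_on_subset[OF assms]])
     (auto simp: fold_quadrant_def)

lemma separating_zero_continuum:
  fixes g :: "'a::euclidean_space \<Rightarrow> real"
  assumes cont: "continuous_on UNIV g" and pos: "g p > 0"
    and T: "connected T" "q \<in> T" and neg: "\<And>z. z \<in> T \<Longrightarrow> g z < 0"
  shows "\<exists>K. connected K \<and> closed K \<and> K \<subseteq> {z. g z = 0}
           \<and> (\<forall>\<gamma>. connected \<gamma> \<longrightarrow> p \<in> \<gamma> \<longrightarrow> \<gamma> \<inter> T \<noteq> {} \<longrightarrow> \<gamma> \<inter> K \<noteq> {})"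
proof -
  define P where "P = {z. g z > 0}"
  define U where "U = connected_component_set P p"
  define C where "C = connected_component_set (- U) q"
  have "open P" unfolding P_def using cont by (simp add: open_Collect_less)
  then have "frontier P \<subseteq> {z. g z = 0}"
    using closure_minimal[of P "{z. g z \<ge> 0}"] cont
    by (force simp: frontier_def interior_open P_def closed_Collect_le)
  then have frontier_U: "frontier U \<subseteq> {z. g z = 0}"
    using frontier_of_connected_component_subset[of P p] by (simp add: U_def)
  have p_U: "p \<in> U" using pos by (simp add: U_def P_def)
  have T_C: "T \<subseteq> C"
  proof -
    have "T \<subseteq> - U" using neg connected_component_subset[of P p] by (force simp: U_def P_def)
    then show ?thesis using T connected_component_maximal by (simp add: C_def)
  qed
  have C_comp: "C \<in> components (- U)"
    using T_C T(2) by (auto simp: C_def components_def)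
  have C_U: "C \<inter> U = {}" using connected_component_subset[of "- U" q] by (auto simp: C_def)
  show ?thesis
  proof (intro exI conjI allI impI)
    show "connected (frontier C)"
      using connected_frontier_component_complement[OF _ C_comp] by (simp add: U_def)
    show "frontier C \<subseteq> {z. g z = 0}"
      using frontier_of_components_subset[OF C_comp] frontier_U by (simp add: frontier_complement)
    show "closed (frontier C)" by simp
    fix \<gamma> assume "connected \<gamma>" "p \<in> \<gamma>" "\<gamma> \<inter> T \<noteq> {}"
    then show "\<gamma> \<inter> frontier C \<noteq> {}"
      using connected_Int_frontier[of \<gamma> C] T_C C_U p_U by blast
  qed
qed

lemma separating_set_meets_ray:
  fixes e :: "real \<Rightarrow> 'a::real_normed_vector"
  assumes separates: "\<And>\<gamma>. connected \<gamma> \<Longrightarrow> 0 \<in> \<gamma> \<Longrightarrow> \<gamma> \<inter> sphere 0 \<rho> \<noteq> {} \<Longrightarrow> \<gamma> \<inter> K \<noteq> {}"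
    and \<rho>: "\<rho> \<ge> 0"
    and e: "continuous_on UNIV e" "e 0 = 0" "\<And>t. norm (e t) = \<bar>t\<bar>"
  shows "\<exists>t. 0 \<le> t \<and> t \<le> \<rho> \<and> e t \<in> K"
proof -
  have "e ` {0..\<rho>} \<inter> K \<noteq> {}"
  proof (rule separates)
    show "connected (e ` {0..\<rho>})"
      by (rule connected_continuous_image[OF continuous_on_subset[OF e(1)]]) auto
    show "0 \<in> e ` {0..\<rho>}" using e(2) \<rho> by force
    have "e \<rho> \<in> e ` {0..\<rho>} \<inter> sphere 0 \<rho>" using e(3)[of \<rho>] \<rho> by simp
    then show "e ` {0..\<rho>} \<inter> sphere 0 \<rho> \<noteq> {}" by blast
  qed
  then show ?thesis by auto
qed

lemma plane_zero_continuum: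
  fixes g :: "real \<times> real \<Rightarrow> real"
  assumes cont: "continuous_on UNIV g" and pos: "g 0 > 0" and R: "R > 0"
    and neg: "\<And>z. norm z > R \<Longrightarrow> g z < 0"
  shows "\<exists>K. connected K \<and> compact K \<and> K \<subseteq> {z. g z = 0}
           \<and> (\<exists>t. 0 < t \<and> t \<le> R \<and> (0, t) \<in> K) \<and> (\<exists>s. 0 < s \<and> s \<le> R \<and> (s, 0) \<in> K)"
proof -
  obtain K where K: "connected K" "closed K" "K \<subseteq> {z. g z = 0}"
    and separates: "\<And>\<gamma>. connected \<gamma> \<Longrightarrow> 0 \<in> \<gamma> \<Longrightarrow> \<gamma> \<inter> sphere 0 (R + 1) \<noteq> {} \<Longrightarrow> \<gamma> \<inter> K \<noteq> {}"
    using separating_zero_continuum[OF cont pos, of "sphere 0 (R + 1)" "(0, R + 1)"] neg R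
    by (auto simp: connected_sphere)
  have K_disc: "norm z \<le> R" if "z \<in> K" for z
    using K(3) that neg[of z] by (auto simp: not_less[symmetric])
  have ray_hit: "\<exists>t. 0 < t \<and> t \<le> R \<and> e t \<in> K"
    if e: "continuous_on UNIV e" "e 0 = 0" "\<And>t. norm (e t) = \<bar>t\<bar>" for e :: "real \<Rightarrow> real \<times> real"
  proof -
    obtain t where t: "0 \<le> t" "e t \<in> K"
      using separating_set_meets_ray[of "R + 1" K e] separates e R by auto
    then have "t \<noteq> 0" using K(3) e(2) pos by auto
    then show ?thesis using t K_disc[of "e t"] e(3)[of t] by (intro exI[of _ t]) auto
  qed
  have "compact K"
    using K(2) K_disc unfolding compact_eq_bounded_closed bounded_iff by blast
  moreover have "\<exists>t. 0 < t \<and> t \<le> R \<and> (0, t) \<in> K"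
    using ray_hit[of "\<lambda>t. (0, t)"] continuous_on_Pair[OF continuous_on_const continuous_on_id]
    by (auto simp: zero_prod_def)
  moreover have "\<exists>s. 0 < s \<and> s \<le> R \<and> (s, 0) \<in> K"
    using ray_hit[of "\<lambda>t. (t, 0)"] continuous_on_Pair[OF continuous_on_id continuous_on_const]
    by (auto simp: zero_prod_def)
  ultimately show ?thesis using K by blast
qed

theorem lemma2p2:
  fixes f :: "real \<times> real \<Rightarrow> real" and R :: real
  assumes cont: "continuous_on {z. fst z \<ge> 0 \<and> snd z \<ge> 0} f"
    and pos: "f (0, 0) > 0"
    and R: "R > 0"
    and neg: "\<And>x y. x \<ge> 0 \<Longrightarrow> y \<ge> 0 \<Longrightarrow> x\<^sup>2 + y\<^sup>2 > R\<^sup>2 \<Longrightarrow> f (x, y) < 0"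
  shows "\<exists>S r. S \<subseteq> {z. fst z \<ge> 0 \<and> snd z \<ge> 0 \<and> f z = 0} \<and> compact S \<and> connected S
           \<and> 0 < r \<and> r < R
           \<and> S \<inter> {(0, y) | y. r \<le> y \<and> y \<le> R} \<noteq> {}
           \<and> S \<inter> {(x, 0) | x. r \<le> x \<and> x \<le> R} \<noteq> {}"
proof -
  define g where "g = f \<circ> fold_quadrant"
  have g_pos: "g 0 > 0" using pos by (simp add: g_def fold_quadrant_def zero_prod_def)
  have g_neg: "g z < 0" if "norm z > R" for z
  proof -
    have "R\<^sup>2 < (norm z)\<^sup>2" using that R by (simp add: power_strict_mono)
    then show ?thesis using neg[of "\<bar>fst z\<bar>" "\<bar>snd z\<bar>"]
      by (simp add: g_def fold_quadrant_def norm_plane_squared)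
  qed
  obtain K t s where K: "connected K" "compact K" "K \<subseteq> {z. g z = 0}"
    and t: "0 < t" "t \<le> R" "(0, t) \<in> K" and s: "0 < s" "s \<le> R" "(s, 0) \<in> K"
    using plane_zero_continuum[OF continuous_even_extension[OF cont, folded g_def] g_pos R g_neg]
    by blast
  define S where "S = fold_quadrant ` K"
  have "compact S" "connected S" unfolding S_def
    using compact_continuous_image connected_continuous_image continuous_fold_quadrant K by blast+
  moreover have "S \<subseteq> {z. fst z \<ge> 0 \<and> snd z \<ge> 0 \<and> f z = 0}"
    using K(3) by (auto simp: S_def g_def fold_quadrant_def)
  moreover have "(0, t) \<in> S" "(s, 0) \<in> S"
    using t s by (force simp: S_def fold_quadrant_def)+
  ultimately show ?thesis using t s
    by (intro exI[of _ S] exI[of _ "min s t / 2"]) auto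
qed

end
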